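(* Fix $b\in(0,1)$ and $0\le\rho\le1$ (with $\rho<1$), and let $\tau:=\rho(1-\rho)^{-1}(1-b)^{-1}$. Consider HL-PushTASEP on $\mathbb{Z}_{\geq 0}$ in which, in addition, particles enter the system through site $0$ at the times of an independent Poisson process of rate $\tau$ (an entering particle arrives at site $0$ and then proceeds as an activated particle under the HL-PushTASEP rules). Then the product Bernoulli measure $\nu_\rho$, under which the occupation variables $\{\eta(x)\}_{x\in\mathbb{Z}_{\geq0}}$ are independent $\mathrm{Ber}(\rho)$ random variables, is invariant for this dynamics: if the process starts from $\nu_\rho$, then at every time $t\ge0$ the occupation variables $\{\eta_t(x)\}_{x\in\mathbb{Z}_{\ge0}}$ are i.i.d. $\mathrm{Ber}(\rho)$.
   Context: HL-PushTASEP on $\mathbb{Z}_{\geq 0}$ with parameter $b\in(0,1)$: particles occupy sites of $\mathbb{Z}_{\geq 0}$, at most one per site, each with an independent rate-$1$ exponential clock. An activated particle moves one step to the right and then continues step by step with probability $b$ per further step (i.e., the particle at $x_m$ jumps $j$ steps with probability $(1-b)b^{j-1}$ for $1\leq j<x_{m+1}-x_m$); with probability $b^{x_{m+1}-x_m-1}$ it reaches the site $x_{m+1}$ of its right neighbour, stops there, and the particle previously at $x_{m+1}$ is instantaneously activated and moves by the same rule. $\eta_t(x)=1$ if site $x$ is occupied at time $t$ and $0$ otherwise. *)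

theory Defs
  imports "HOL-Probability.Probability"
begin

text \<open>HL-PushTASEP on the nonnegative integers with boundary entry through site 0,
observed on the window of sites {0..n}.  Since all motion is to the right, the
configuration on {0..n} is itself a finite-state continuous-time Markov chain
(particles that jump beyond n simply leave the window).  Configurations on the
window are represented by the set of occupied sites, a subset of {..n}.\<close>

text \<open>fly n b S q: a particle in flight arrives at site q (its previous step brought
it there), in configuration S (the flying particle not counted in S).  If q is occupied, it stops at q and the particle at
q is activated, its first (mandatory) step bringing it to q+1.  If q is empty, it
stops at q with probability 1-b and continues to q+1 with probability b.\<close>

function fly :: "nat \<Rightarrow> real \<Rightarrow> nat set \<Rightarrow> nat \<Rightarrow> nat set pmf" where
  "fly n b S q =
     (if n < q then return_pmf S
      else if q \<in> S then fly n b S (Suc q)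
      else bind_pmf (bernoulli_pmf b)
             (\<lambda>c. if c then fly n b S (Suc q) else return_pmf (insert q S)))"
  by auto
termination
  by (relation "Wellfounded.measure (\<lambda>(n, b, S, q). Suc n - q)") auto

text \<open>Generator of the window chain: each particle at x (rate 1) is activated, leaves x
and makes its first step to x+1; particles enter at rate tau as a particle whose
first step brings it to site 0.\<close>

definition gen :: "nat \<Rightarrow> real \<Rightarrow> real \<Rightarrow> nat set \<Rightarrow> nat set \<Rightarrow> real" where
  "gen n b tau S T =
     (\<Sum>x\<in>S. pmf (fly n b (S - {x}) (Suc x)) T - (if T = S then 1 else 0))
     + tau * (pmf (fly n b S 0) T - (if T = S then 1 else 0))"

fun matpow :: "nat \<Rightarrow> (nat set \<Rightarrow> nat set \<Rightarrow> real) \<Rightarrow> nat \<Rightarrow> nat set \<Rightarrow> nat set \<Rightarrow> real" where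
  "matpow n Q 0 S T = (if S = T then 1 else 0)"
| "matpow n Q (Suc k) S T = (\<Sum>U\<in>Pow {..n}. matpow n Q k S U * Q U T)"

definition window_semigroup :: "nat \<Rightarrow> real \<Rightarrow> real \<Rightarrow> real \<Rightarrow> nat set \<Rightarrow> nat set \<Rightarrow> real" where
  "window_semigroup n b tau t S T = (\<Sum>k. t ^ k / fact k * matpow n (gen n b tau) k S T)"

definition bern :: "nat \<Rightarrow> real \<Rightarrow> nat set \<Rightarrow> real" where
  "bern n rho S = rho ^ card S * (1 - rho) ^ (Suc n - card S)"

end

theory Submission
  imports Defs
begin

(* Because particles only move right, the window {..n} is a finite Markov chain with generator
   gen, so it suffices that the Bernoulli weights form a left null vector of gen: the exponential
   series defining the semigroup then leaves them fixed.
   Let bern_fly q T be the probability that a particle launched towards site q into a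
   Bernoulli(rho) window produces the configuration T.  A flight never alters the sites it has
   passed, which gives the recursion bern_fly q T = bern_fly (q+1) T + (1-b) bern (T - {q}) for
   q in T and bern_fly q T = b bern_fly (q+1) T otherwise, with bern_fly q T = bern T beyond the
   window.  A backward induction on q then matches the inflow
   rho/(1-rho) * sum_{x<=n, x notin T} bern_fly (x+1) T + tau * bern_fly 0 T into T with the
   outflow (|T| + tau) * bern T; the relation tau (1-b) = rho/(1-rho) makes every step cancel. *)

declare fly.simps [simp del]

lemma sum_Pow_split:
  assumes "finite A" "x \<in> A"
  shows "(\<Sum>S\<in>Pow A. f S) = (\<Sum>S\<in>Pow (A - {x}). f S) + (\<Sum>S\<in>Pow (A - {x}). f (insert x S))"
proof -
  have "inj_on (insert x) (Pow (A - {x}))"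
    by (intro inj_onI) (metis Diff_iff PowD insertI1 insert_ident subsetD)
  moreover have "A = insert x (A - {x})"
    using assms(2) by blast
  ultimately show ?thesis
    using assms(1) by (subst (1) \<open>A = _\<close>, subst Pow_insert, subst sum.union_disjoint) (auto simp: sum.reindex)
qed

lemma bern_insert:
  assumes "insert x T \<subseteq> {..n}" "x \<notin> T" "rho \<noteq> 1"
  shows "bern n rho (insert x T) = rho / (1 - rho) * bern n rho T"
proof -
  have fin: "finite T"
    using assms(1) finite_subset by auto
  have "card (insert x T) \<le> card {..n}"
    using assms(1) by (intro card_mono) auto
  then have "Suc n - card T = Suc (Suc n - card (insert x T))"
    using fin assms(2) by simp
  then show ?thesis
    unfolding bern_def using fin assms(2,3) by (simp add: field_simps)
qed

lemma fly_preserves_below: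
  assumes "T \<in> set_pmf (fly n b R q)" "x < q"
  shows "x \<in> T \<longleftrightarrow> x \<in> R"
  using assms
proof (induction n b R q rule: fly.induct)
  case (1 n b S q)
  then show ?case
    by (subst (asm) fly.simps) (auto split: if_splits)
qed

lemma pmf_fly_eq_0:
  assumes "x < q" "(x \<in> T) \<noteq> (x \<in> R)"
  shows "pmf (fly n b R q) T = 0"
  using fly_preserves_below[of T n b R q x] assms by (auto simp: set_pmf_iff)

definition bern_fly :: "nat \<Rightarrow> real \<Rightarrow> real \<Rightarrow> nat \<Rightarrow> nat set \<Rightarrow> real" where
  "bern_fly n b rho q T = (\<Sum>R\<in>Pow {..n}. bern n rho R * pmf (fly n b R q) T)"

lemma bern_fly_split:
  assumes "x < q" "x \<le> n"
  shows bern_fly_split_absent: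
      "(\<Sum>R\<in>Pow ({..n} - {x}). bern n rho R * pmf (fly n b R q) T)
         = (if x \<in> T then 0 else bern_fly n b rho q T)"
    and bern_fly_split_present:
      "(\<Sum>R\<in>Pow ({..n} - {x}). bern n rho (insert x R) * pmf (fly n b (insert x R) q) T)
         = (if x \<in> T then bern_fly n b rho q T else 0)"
proof -
  let ?A = "{..n} - {x}"
  have "bern_fly n b rho q T = (\<Sum>R\<in>Pow ?A. bern n rho R * pmf (fly n b R q) T)
      + (\<Sum>R\<in>Pow ?A. bern n rho (insert x R) * pmf (fly n b (insert x R) q) T)"
    unfolding bern_fly_def using assms(2) by (intro sum_Pow_split) auto
  moreover have "(\<Sum>R\<in>Pow ?A. bern n rho R * pmf (fly n b R q) T) = 0" if "x \<in> T"
    using that assms(1) pmf_fly_eq_0[of x q T _ n b] by (intro sum.neutral) auto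
  moreover have "(\<Sum>R\<in>Pow ?A. bern n rho (insert x R) * pmf (fly n b (insert x R) q) T) = 0"
    if "x \<notin> T"
    using that assms(1) pmf_fly_eq_0[of x q T _ n b] by (intro sum.neutral) auto
  ultimately show
      "(\<Sum>R\<in>Pow ?A. bern n rho R * pmf (fly n b R q) T) = (if x \<in> T then 0 else bern_fly n b rho q T)"
      "(\<Sum>R\<in>Pow ?A. bern n rho (insert x R) * pmf (fly n b (insert x R) q) T)
         = (if x \<in> T then bern_fly n b rho q T else 0)"
    by auto
qed

lemma bern_fly_beyond:
  assumes "n < q" "T \<subseteq> {..n}"
  shows "bern_fly n b rho q T = bern n rho T"
proof -
  have "bern_fly n b rho q T = (\<Sum>R\<in>Pow {..n}. if R = T then bern n rho R else 0)"
    unfolding bern_fly_def using assms(1)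
    by (intro sum.cong refl) (simp add: fly.simps[of n b _ q] indicator_def)
  also have "\<dots> = bern n rho T"
    using assms(2) by simp
  finally show ?thesis .
qed

lemma bern_fly_step:
  assumes "0 \<le> b" "b \<le> 1" "q \<le> n" "T \<subseteq> {..n}"
  shows "bern_fly n b rho q T =
    (if q \<in> T then bern_fly n b rho (Suc q) T + (1 - b) * bern n rho (T - {q})
     else b * bern_fly n b rho (Suc q) T)"
proof -
  let ?A = "{..n} - {q}"
  have launch_empty: "pmf (fly n b R q) T
      = b * pmf (fly n b R (Suc q)) T + (1 - b) * (if R = T - {q} \<and> q \<in> T then 1 else 0)"
    if "R \<in> Pow ?A" for R
    using that assms(1-3) by (subst fly.simps) (auto simp: pmf_bind indicator_def)
  have launch_full: "pmf (fly n b (insert q R) q) T = pmf (fly n b (insert q R) (Suc q)) T" for R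
    using assms(3) by (subst fly.simps) simp
  have "bern_fly n b rho q T = (\<Sum>R\<in>Pow ?A. bern n rho R * pmf (fly n b R q) T)
      + (\<Sum>R\<in>Pow ?A. bern n rho (insert q R) * pmf (fly n b (insert q R) q) T)"
    unfolding bern_fly_def using assms(3) by (intro sum_Pow_split) auto
  also have "(\<Sum>R\<in>Pow ?A. bern n rho R * pmf (fly n b R q) T)
      = b * (\<Sum>R\<in>Pow ?A. bern n rho R * pmf (fly n b R (Suc q)) T)
        + (1 - b) * (\<Sum>R\<in>Pow ?A. if R = T - {q} \<and> q \<in> T then bern n rho R else 0)"
    unfolding sum_distrib_left sum.distrib[symmetric]
    by (intro sum.cong refl) (simp add: launch_empty algebra_simps)
  also have "(\<Sum>R\<in>Pow ?A. if R = T - {q} \<and> q \<in> T then bern n rho R else 0)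
      = (if q \<in> T then bern n rho (T - {q}) else 0)"
    using assms(4) by (auto simp: sum.delta')
  also have "(\<Sum>R\<in>Pow ?A. bern n rho (insert q R) * pmf (fly n b (insert q R) q) T)
      = (if q \<in> T then bern_fly n b rho (Suc q) T else 0)"
    unfolding launch_full using assms(3) by (simp add: bern_fly_split_present)
  finally show ?thesis
    using assms(3) by (simp add: bern_fly_split_absent)
qed

lemma activation_inflow:
  assumes "rho \<noteq> 1"
  shows "(\<Sum>S\<in>Pow {..n}. bern n rho S * (\<Sum>x\<in>S. pmf (fly n b (S - {x}) (Suc x)) T))
    = rho / (1 - rho) * (\<Sum>x\<in>{..n} - T. bern_fly n b rho (Suc x) T)"
proof -
  let ?g = "\<lambda>x S. bern n rho S * pmf (fly n b (S - {x}) (Suc x)) T"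
  have activated_at: "(\<Sum>S\<in>Pow {..n}. if x \<in> S then ?g x S else 0)
      = (if x \<in> T then 0 else rho / (1 - rho) * bern_fly n b rho (Suc x) T)" if "x \<le> n" for x
  proof -
    let ?A = "{..n} - {x}"
    have "(\<Sum>S\<in>Pow {..n}. if x \<in> S then ?g x S else 0)
        = (\<Sum>R\<in>Pow ?A. if x \<in> R then ?g x R else 0)
          + (\<Sum>R\<in>Pow ?A. if x \<in> insert x R then ?g x (insert x R) else 0)"
      using that by (intro sum_Pow_split) auto
    also have "(\<Sum>R\<in>Pow ?A. if x \<in> R then ?g x R else 0) = 0"
      by (intro sum.neutral) auto
    also have "(\<Sum>R\<in>Pow ?A. if x \<in> insert x R then ?g x (insert x R) else 0)
        = rho / (1 - rho) * (\<Sum>R\<in>Pow ?A. bern n rho R * pmf (fly n b R (Suc x)) T)"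
      unfolding sum_distrib_left
    proof (intro sum.cong refl)
      fix R assume "R \<in> Pow ?A"
      then have "insert x R \<subseteq> {..n}" "x \<notin> R"
        using that by auto
      then show "(if x \<in> insert x R then ?g x (insert x R) else 0)
          = rho / (1 - rho) * (bern n rho R * pmf (fly n b R (Suc x)) T)"
        using assms bern_insert[of x R n rho] by simp
    qed
    finally show ?thesis
      using that by (simp add: bern_fly_split_absent)
  qed
  have "(\<Sum>S\<in>Pow {..n}. bern n rho S * (\<Sum>x\<in>S. pmf (fly n b (S - {x}) (Suc x)) T))
      = (\<Sum>S\<in>Pow {..n}. \<Sum>x\<le>n. if x \<in> S then ?g x S else 0)"
    unfolding sum_distrib_left
  proof (rule sum.cong[OF refl])
    fix S assume "S \<in> Pow {..n}"
    then have "{..n} \<inter> S = S"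
      by auto
    then show "(\<Sum>x\<in>S. ?g x S) = (\<Sum>x\<le>n. if x \<in> S then ?g x S else 0)"
      by (simp only: sum.inter_restrict[OF finite_atMost, symmetric])
  qed
  also have "\<dots> = (\<Sum>x\<le>n. if x \<in> T then 0 else rho / (1 - rho) * bern_fly n b rho (Suc x) T)"
    by (subst sum.swap) (simp add: activated_at)
  also have "\<dots> = rho / (1 - rho) * (\<Sum>x\<in>{..n} - T. bern_fly n b rho (Suc x) T)"
    by (simp add: sum.If_cases sum_distrib_left Diff_eq)
  finally show ?thesis .
qed

lemma bern_fly_balance:
  fixes tau :: real
  assumes "0 \<le> b" "b \<le> 1" "rho \<noteq> 1" "tau * (1 - b) = rho / (1 - rho)"
    and "T \<subseteq> {..n}" "q \<le> Suc n"
  shows "rho / (1 - rho) * (\<Sum>x\<in>{q..n} - T. bern_fly n b rho (Suc x) T) + tau * bern_fly n b rho q T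
    = (card (T \<inter> {q..n}) + tau) * bern n rho T"
  using assms(6)
proof (induction q rule: inc_induct)
  case base
  show ?case
    using assms(5) by (simp add: bern_fly_beyond)
next
  case (step q)
  let ?r = "rho / (1 - rho)" and ?F = "\<lambda>q. bern_fly n b rho q T"
  have q: "{q..n} = insert q {Suc q..n}"
    using step.hyps by auto
  show ?case
  proof (cases "q \<in> T")
    case True
    have "tau * ((1 - b) * bern n rho (T - {q})) = ?r * bern n rho (T - {q})"
      by (simp only: mult.assoc[symmetric] assms(4))
    also have "\<dots> = bern n rho T"
      using bern_insert[of q "T - {q}" n rho] True assms(3,5) by (simp add: insert_absorb)
    finally have "tau * ((1 - b) * bern n rho (T - {q})) = bern n rho T" .
    moreover have "{q..n} - T = {Suc q..n} - T" "T \<inter> {q..n} = insert q (T \<inter> {Suc q..n})"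
      using True q by auto
    moreover have "?F q = ?F (Suc q) + (1 - b) * bern n rho (T - {q})"
      using bern_fly_step[OF assms(1,2) _ assms(5), where rho=rho and q=q] step.hyps True by simp
    ultimately show ?thesis
      using step.IH by (simp add: distrib_left distrib_right)
  next
    case False
    have "?r * ?F (Suc q) + tau * (b * ?F (Suc q)) = tau * ?F (Suc q)"
      by (simp flip: assms(4) add: algebra_simps)
    moreover have "{q..n} - T = insert q ({Suc q..n} - T)" "T \<inter> {q..n} = T \<inter> {Suc q..n}"
      using False q by auto
    moreover have "?F q = b * ?F (Suc q)"
      using bern_fly_step[OF assms(1,2) _ assms(5), where rho=rho and q=q] step.hyps False by simp
    ultimately show ?thesis
      using step.IH by (simp add: algebra_simps)
  qed
qed

lemma bern_gen_balance:
  assumes "0 \<le> b" "b < 1" "rho \<noteq> 1" "tau = rho / ((1 - rho) * (1 - b))" "T \<subseteq> {..n}"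
  shows "(\<Sum>S\<in>Pow {..n}. bern n rho S * gen n b tau S T) = 0"
proof -
  let ?r = "rho / (1 - rho)"
  have tau: "tau * (1 - b) = ?r"
    using assms(2,4) by simp
  have "bern n rho S * gen n b tau S T
      = bern n rho S * (\<Sum>x\<in>S. pmf (fly n b (S - {x}) (Suc x)) T)
        + tau * (bern n rho S * pmf (fly n b S 0) T)
        - (if S = T then (card T + tau) * bern n rho T else 0)" for S
    unfolding gen_def by (simp add: sum_subtractf algebra_simps)
  then have "(\<Sum>S\<in>Pow {..n}. bern n rho S * gen n b tau S T)
      = (\<Sum>S\<in>Pow {..n}. bern n rho S * (\<Sum>x\<in>S. pmf (fly n b (S - {x}) (Suc x)) T))
        + (\<Sum>S\<in>Pow {..n}. tau * (bern n rho S * pmf (fly n b S 0) T))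
        - (\<Sum>S\<in>Pow {..n}. if S = T then (card T + tau) * bern n rho T else 0)"
    by (simp only: sum.distrib sum_subtractf)
  also have "\<dots> = ?r * (\<Sum>x\<in>{..n} - T. bern_fly n b rho (Suc x) T) + tau * bern_fly n b rho 0 T
        - (card T + tau) * bern n rho T"
    unfolding activation_inflow[OF assms(3)] using assms(5) by (simp add: bern_fly_def sum_distrib_left)
  also have "\<dots> = 0"
    using bern_fly_balance[OF assms(1) _ assms(3) tau assms(5), of 0] assms(2,5)
    by (simp add: atLeast0AtMost Int_absorb2)
  finally show ?thesis .
qed

lemma left_null_matpow:
  assumes "\<forall>T\<in>Pow {..n}. (\<Sum>S\<in>Pow {..n}. v S * Q S T) = 0" "T \<in> Pow {..n}"
  shows "(\<Sum>S\<in>Pow {..n}. v S * matpow n Q k S T) = (if k = 0 then v T else 0)"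
  using assms(2)
proof (induction k arbitrary: T)
  case 0
  then show ?case
    by (simp add: if_distrib cong: if_cong)
next
  case (Suc k)
  have "(\<Sum>S\<in>Pow {..n}. v S * matpow n Q (Suc k) S T)
      = (\<Sum>S\<in>Pow {..n}. \<Sum>U\<in>Pow {..n}. v S * matpow n Q k S U * Q U T)"
    by (simp add: sum_distrib_left mult.assoc)
  also have "\<dots> = (\<Sum>U\<in>Pow {..n}. (\<Sum>S\<in>Pow {..n}. v S * matpow n Q k S U) * Q U T)"
    by (subst sum.swap) (simp add: sum_distrib_right)
  also have "\<dots> = (\<Sum>U\<in>Pow {..n}. (if k = 0 then v U else 0) * Q U T)"
    using Suc.IH by simp
  also have "\<dots> = 0"
    using assms(1) Suc.prems by (cases "k = 0") auto
  finally show ?case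
    by simp
qed

lemma abs_matpow_le:
  assumes "T \<in> Pow {..n}"
  shows "\<bar>matpow n Q k S T\<bar> \<le> (\<Sum>U\<in>Pow {..n}. \<Sum>V\<in>Pow {..n}. \<bar>Q U V\<bar>) ^ k"
  using assms
proof (induction k arbitrary: T)
  case 0
  then show ?case
    by simp
next
  case (Suc k)
  define K where "K = (\<Sum>U\<in>Pow {..n}. \<Sum>V\<in>Pow {..n}. \<bar>Q U V\<bar>)"
  have "\<bar>matpow n Q (Suc k) S T\<bar> \<le> (\<Sum>U\<in>Pow {..n}. \<bar>matpow n Q k S U\<bar> * \<bar>Q U T\<bar>)"
    by (simp add: abs_mult[symmetric] sum_abs del: matpow.simps(1))
  also have "\<dots> \<le> (\<Sum>U\<in>Pow {..n}. K ^ k * \<bar>Q U T\<bar>)"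
    by (intro sum_mono mult_right_mono) (use Suc.IH in \<open>auto simp: K_def\<close>)
  also have "\<dots> = K ^ k * (\<Sum>U\<in>Pow {..n}. \<bar>Q U T\<bar>)"
    by (simp add: sum_distrib_left)
  also have "(\<Sum>U\<in>Pow {..n}. \<bar>Q U T\<bar>) \<le> K"
    unfolding K_def using Suc.prems by (intro sum_mono member_le_sum) auto
  then have "K ^ k * (\<Sum>U\<in>Pow {..n}. \<bar>Q U T\<bar>) \<le> K ^ k * K"
    by (rule mult_left_mono) (simp add: K_def sum_nonneg)
  finally show ?case
    by (simp add: K_def mult.commute)
qed

lemma summable_exp_matpow:
  assumes "T \<in> Pow {..n}"
  shows "summable (\<lambda>k. t ^ k / fact k * matpow n Q k S T)"
proof (rule summable_comparison_test')
  define K where "K = (\<Sum>U\<in>Pow {..n}. \<Sum>V\<in>Pow {..n}. \<bar>Q U V\<bar>)"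
  show "summable (\<lambda>k. (\<bar>t\<bar> * K) ^ k / fact k)"
    using summable_exp_generic[of "\<bar>t\<bar> * K"] by (simp add: divide_inverse mult.commute)
  fix k :: nat
  have "norm (t ^ k / fact k * matpow n Q k S T) = \<bar>t\<bar> ^ k / fact k * \<bar>matpow n Q k S T\<bar>"
    by (simp add: abs_mult power_abs)
  also have "\<dots> \<le> \<bar>t\<bar> ^ k / fact k * K ^ k"
    using abs_matpow_le[OF assms] by (intro mult_left_mono) (simp_all add: K_def)
  finally show "norm (t ^ k / fact k * matpow n Q k S T) \<le> (\<bar>t\<bar> * K) ^ k / fact k"
    by (simp add: power_mult_distrib)
qed

lemma left_null_exp_series:
  assumes "\<forall>T\<in>Pow {..n}. (\<Sum>S\<in>Pow {..n}. v S * Q S T) = 0" "T \<in> Pow {..n}"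
  shows "(\<Sum>S\<in>Pow {..n}. v S * (\<Sum>k. t ^ k / fact k * matpow n Q k S T)) = v T"
proof -
  have "(\<Sum>S\<in>Pow {..n}. v S * (\<Sum>k. t ^ k / fact k * matpow n Q k S T))
      = (\<Sum>k. \<Sum>S\<in>Pow {..n}. v S * (t ^ k / fact k * matpow n Q k S T))"
    using summable_exp_matpow[OF assms(2)]
    by (simp only: suminf_mult[symmetric] suminf_sum[symmetric] summable_mult)
  also have "\<dots> = (\<Sum>k. if k = 0 then v T else 0)"
  proof (rule suminf_cong)
    fix k
    have "(\<Sum>S\<in>Pow {..n}. v S * (t ^ k / fact k * matpow n Q k S T))
        = t ^ k / fact k * (\<Sum>S\<in>Pow {..n}. v S * matpow n Q k S T)"
      by (simp add: sum_distrib_left mult_ac)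
    also have "\<dots> = (if k = 0 then v T else 0)"
      by (simp add: left_null_matpow[OF assms])
    finally show "(\<Sum>S\<in>Pow {..n}. v S * (t ^ k / fact k * matpow n Q k S T))
        = (if k = 0 then v T else 0)" .
  qed
  also have "\<dots> = v T"
    using sums_single[of 0 "\<lambda>_. v T"] by (simp add: sums_iff)
  finally show ?thesis .
qed

theorem lemma2p13:
  fixes b rho tau :: real
  assumes "0 < b" and "b < 1"
    and "0 \<le> rho" and "rho < 1"
    and "tau = rho / ((1 - rho) * (1 - b))"
  shows "\<forall>n t T. 0 \<le> t \<longrightarrow> T \<subseteq> {..n} \<longrightarrow>
           (\<Sum>S\<in>Pow {..n}. bern n rho S * window_semigroup n b tau t S T) = bern n rho T"
proof (intro allI impI)
  fix n :: nat and t :: real and T :: "nat set"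
  assume "0 \<le> t" "T \<subseteq> {..n}"
  have "\<forall>T\<in>Pow {..n}. (\<Sum>S\<in>Pow {..n}. bern n rho S * gen n b tau S T) = 0"
    using bern_gen_balance[OF _ assms(2) _ assms(5)] assms(1,4) by simp
  with \<open>T \<subseteq> {..n}\<close>
  show "(\<Sum>S\<in>Pow {..n}. bern n rho S * window_semigroup n b tau t S T) = bern n rho T"
    unfolding window_semigroup_def by (intro left_null_exp_series) auto
qed

end
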